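(* Let $F$ be an infinite field, let $n>1$ be an integer, and let $p\in F[x]$ be a nonconstant polynomial. Then every matrix in $\mathrm{M}_n(F)$ can be expressed as a product of two elements of $p[\mathrm{M}_n(F),\mathrm{M}_n(F)]=\{p(AB)-p(BA)\mid A,B\in\mathrm{M}_n(F)\}$. *)

theory Defs
  imports "HOL-Computational_Algebra.Polynomial" "Jordan_Normal_Form.Matrix"
begin

definition mat_poly :: "'a::comm_ring_1 poly \<Rightarrow> 'a mat \<Rightarrow> 'a mat" where
  "mat_poly p A = foldr (\<lambda>c M. c \<cdot>\<^sub>m 1\<^sub>m (dim_row A) + A * M) (coeffs p)
                        (0\<^sub>m (dim_row A) (dim_row A))"

definition poly_commutators :: "'a::comm_ring_1 poly \<Rightarrow> nat \<Rightarrow> 'a mat set" where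
  "poly_commutators p n =
     {mat_poly p (A * B) - mat_poly p (B * A) | A B.
        A \<in> carrier_mat n n \<and> B \<in> carrier_mat n n}"

end

(*
  Choose u_0, u_1, ... such that the values w_i = p(u_i) are pairwise distinct; this is possible
  since a nonconstant polynomial over an infinite field has infinite range. Let Y have diagonal
  (w_i - w_(s i))_i for a permutation s. Write Y = W - W' with W upper triangular with diagonal w
  and W' lower triangular with diagonal w o s. Both have distinct eigenvalues, so W' = P W P^-1,
  and W = p(Q) for some Q similar to diag(u); hence Y = p(P^-1 (P Q)) - p((P Q) P^-1).
  For s = id and for the transposition of 0 and 1 this shows that p[M_n, M_n] contains every
  matrix similar to one with zero diagonal or with diagonal (d, -d, 0, ..., 0), d = w_0 - w_1.

  It remains to write every M as X Y with X invertible and similar to a matrix with zero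
  diagonal, and Y of one of these two kinds. This goes by induction on n >= 2. Diagonal matrices
  are handled by the cyclic shift, 2 x 2 matrices by a direct computation after a similarity
  (here F infinite is used once more), and any other M is conjugated to have a nonzero
  off-diagonal entry in its last column and is then factored by bordering a factorization of an
  (n - 1) x (n - 1) matrix; the invertibility of X is what makes the bordering possible.
*)

theory Submission
  imports Defs "Jordan_Normal_Form.Determinant" "Jordan_Normal_Form.Column_Operations"
begin

lemma dim_mat_diag [simp]: "dim_row (mat_diag n f) = n" "dim_col (mat_diag n f) = n"
  by (simp_all add: mat_diag_def)

lemma mult_cancel_inverse_left:
  fixes Q :: "'a::semiring_1 mat"
  assumes "Q \<in> carrier_mat n n" "P \<in> carrier_mat n n" "Q * P = 1\<^sub>m n" "X \<in> carrier_mat n m"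
  shows "Q * (P * X) = X"
  using assms by (simp flip: assoc_mult_mat[of Q n n P n X m])

lemma mult_conj_mat:
  fixes P :: "'a::semiring_1 mat"
  assumes P: "P \<in> carrier_mat n n" and Q: "Q \<in> carrier_mat n n" and QP: "Q * P = 1\<^sub>m n"
    and A: "A \<in> carrier_mat n n" and B: "B \<in> carrier_mat n n"
  shows "(P * A * Q) * (P * B * Q) = P * (A * B) * Q"
proof -
  have "(P * A * Q) * (P * B * Q) = P * (A * (Q * (P * (B * Q))))"
    using P Q A B by (simp add: assoc_mult_mat[of _ n n _ n _ n])
  also have "Q * (P * (B * Q)) = B * Q"
    using mult_cancel_inverse_left[OF Q P QP, of "B * Q" n] B Q by simp
  finally show ?thesis
    using P Q A B by (simp add: assoc_mult_mat[of _ n n _ n _ n])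
qed

lemma det_nonzero_obtain_inverse:
  fixes A :: "'a::field mat"
  assumes "A \<in> carrier_mat n n" and "det A \<noteq> 0"
  obtains B where "B \<in> carrier_mat n n" "A * B = 1\<^sub>m n" "B * A = 1\<^sub>m n"
  using det_non_zero_imp_unit[OF assms, of "()"] that unfolding Units_def ring_mat_def by auto

lemma similar_mat_transpose:
  fixes A :: "'a::comm_semiring_1 mat"
  assumes "similar_mat A B"
  shows "similar_mat (transpose_mat A) (transpose_mat B)"
proof -
  obtain n P Q where carr: "{A, B, P, Q} \<subseteq> carrier_mat n n" and PQ: "P * Q = 1\<^sub>m n"
    and QP: "Q * P = 1\<^sub>m n" and A_eq: "A = P * B * Q"
    using similar_matD[OF assms] by blast
  then have P: "P \<in> carrier_mat n n" and B: "B \<in> carrier_mat n n" and Q: "Q \<in> carrier_mat n n"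
    by auto
  show ?thesis
  proof (rule similar_matI)
    show "{transpose_mat A, transpose_mat B, transpose_mat Q, transpose_mat P} \<subseteq> carrier_mat n n"
      using carr by auto
    show "transpose_mat Q * transpose_mat P = 1\<^sub>m n"
      using transpose_mult[OF P Q] PQ by simp
    show "transpose_mat P * transpose_mat Q = 1\<^sub>m n"
      using transpose_mult[OF Q P] QP by simp
    show "transpose_mat A = transpose_mat Q * transpose_mat B * transpose_mat P"
      unfolding A_eq using P B Q
      by (simp add: transpose_mult[of _ n n _ n] assoc_mult_mat[of _ n n _ n _ n])
  qed
qed

lemma det_four_block_mat_schur:
  fixes A :: "'a::idom mat"
  assumes A: "A \<in> carrier_mat n n" and A': "A' \<in> carrier_mat n n" and AA': "A * A' = 1\<^sub>m n"
    and B: "B \<in> carrier_mat n m" and C: "C \<in> carrier_mat m n" and D: "D \<in> carrier_mat m m"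
  shows "det (four_block_mat A B C D) = det A * det (D - C * A' * B)"
proof -
  let ?E = "four_block_mat (1\<^sub>m n) (- (A' * B)) (0\<^sub>m m n) (1\<^sub>m m)"
  have "A * - (A' * B) + B * 1\<^sub>m m = 0\<^sub>m n m"
    using A A' B AA' mult_cancel_inverse_left[OF A A' AA' B] by (intro eq_matI) auto
  moreover have "C * - (A' * B) + D * 1\<^sub>m m = D - C * A' * B"
    using A' B C D by (intro eq_matI) (auto simp: assoc_mult_mat[of C m n A' n B m])
  moreover have "- (A' * B) \<in> carrier_mat n m"
    using A' B by simp
  ultimately have "four_block_mat A B C D * ?E = four_block_mat A (0\<^sub>m n m) C (D - C * A' * B)"
    using A B C D
    by (simp add: mult_four_block_mat[OF A B C D one_carrier_mat _ zero_carrier_mat one_carrier_mat])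
  moreover have "four_block_mat A B C D \<in> carrier_mat (n + m) (n + m)" "?E \<in> carrier_mat (n + m) (n + m)"
    using A B C D by auto
  ultimately have "det (four_block_mat A B C D) * det ?E = det (four_block_mat A (0\<^sub>m n m) C (D - C * A' * B))"
    by (simp flip: det_mult)
  also have "\<dots> = det A * det (D - C * A' * B)"
    using A' B C D by (intro det_four_block_mat_upper_right_zero[OF A refl C]) auto
  finally have "det (four_block_mat A B C D) * det ?E = det A * det (D - C * A' * B)" .
  moreover have "det ?E = 1"
    using A' B by (simp add: det_four_block_mat_lower_left_zero[of _ n _ m])
  ultimately show ?thesis
    by simp
qed

lemma index_mult_mat_2:
  assumes "A \<in> carrier_mat m 2" "B \<in> carrier_mat 2 l" "i < m" "j < l"
  shows "(A * B) $$ (i,j) = A $$ (i,0) * B $$ (0,j) + A $$ (i,1) * B $$ (1,j)"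
proof -
  have "(A * B) $$ (i,j) = (\<Sum>k\<in>{0..<2}. A $$ (i,k) * B $$ (k,j))"
    using assms by (simp add: scalar_prod_def)
  also have "\<dots> = A $$ (i,0) * B $$ (0,j) + A $$ (i,1) * B $$ (1,j)"
    by (simp add: numeral_2_eq_2)
  finally show ?thesis .
qed

lemma poly_nonroot_exists:
  fixes q :: "'a::idom poly"
  assumes "infinite (UNIV :: 'a set)" and "q \<noteq> 0"
  obtains x where "poly q x \<noteq> 0"
proof -
  have "{x. poly q x = 0} \<noteq> UNIV"
    using poly_roots_finite[OF assms(2)] assms(1) by metis
  then show ?thesis
    using that by blast
qed

lemma infinite_range_poly:
  fixes p :: "'a::idom poly"
  assumes inf: "infinite (UNIV :: 'a set)" and deg: "degree p > 0"
  shows "infinite (range (poly p))"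
proof
  assume fin: "finite (range (poly p))"
  have roots: "finite {x. poly p x = y}" for y
  proof -
    have "p - [:y:] \<noteq> 0"
      using deg by (auto simp: degree_pCons_eq_if)
    then have "finite {x. poly (p - [:y:]) x = 0}"
      by (rule poly_roots_finite)
    then show ?thesis
      by simp
  qed
  have "UNIV = (\<Union>y\<in>range (poly p). {x. poly p x = y})"
    by auto
  then have "finite (UNIV :: 'a set)"
    using fin roots by (metis finite_UN_I)
  then show False
    using inf by simp
qed

lemma exists_inj_poly_values:
  fixes p :: "'a::idom poly"
  assumes "infinite (UNIV :: 'a set)" and "degree p > 0"
  obtains u :: "nat \<Rightarrow> 'a" where "inj (\<lambda>i. poly p (u i))"
proof -
  obtain f :: "nat \<Rightarrow> 'a" where f: "inj f" and f_range: "range f \<subseteq> range (poly p)"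
    using infinite_countable_subset[OF infinite_range_poly[OF assms]] by blast
  have "poly p (inv_into UNIV (poly p) (f i)) = f i" for i
    using f_range by (intro f_inv_into_f) auto
  then show ?thesis
    using f that[of "\<lambda>i. inv_into UNIV (poly p) (f i)"] by simp
qed

section \<open>Polynomials evaluated at matrices\<close>

lemma mat_poly_carrier:
  assumes "A \<in> carrier_mat n n"
  shows "mat_poly p A \<in> carrier_mat n n"
proof -
  have "foldr (\<lambda>c M. c \<cdot>\<^sub>m 1\<^sub>m n + A * M) cs (0\<^sub>m n n) \<in> carrier_mat n n" for cs
    by (induction cs) (use assms in auto)
  then show ?thesis
    using assms unfolding mat_poly_def by simp
qed

lemma mat_poly_similar:
  fixes A :: "'a::comm_ring_1 mat"
  assumes "similar_mat_wit A B P Q"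
  shows "mat_poly p A = P * mat_poly p B * Q"
proof -
  obtain n where A: "A \<in> carrier_mat n n" and B: "B \<in> carrier_mat n n"
    and P: "P \<in> carrier_mat n n" and Q: "Q \<in> carrier_mat n n"
    and PQ: "P * Q = 1\<^sub>m n" and QP: "Q * P = 1\<^sub>m n" and APBQ: "A = P * B * Q"
    using similar_mat_witD[OF refl assms] by blast
  let ?horner = "\<lambda>C cs. foldr (\<lambda>c M. c \<cdot>\<^sub>m 1\<^sub>m n + C * M) cs (0\<^sub>m n n)"
  have "?horner A cs = P * ?horner B cs * Q" for cs
  proof (induction cs)
    case Nil
    show ?case using P Q by simp
  next
    case (Cons c cs)
    define F where "F = ?horner B cs"
    have F: "F \<in> carrier_mat n n" unfolding F_def by (induction cs) (use B in auto)
    have "A * (P * F * Q) = P * (B * F) * Q"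
      unfolding APBQ by (rule mult_conj_mat[OF P Q QP B F])
    moreover have "c \<cdot>\<^sub>m 1\<^sub>m n = P * (c \<cdot>\<^sub>m 1\<^sub>m n) * Q"
      using P Q PQ mult_smult_distrib[OF P one_carrier_mat, of c] mult_smult_assoc_mat[OF P Q, of c]
      by simp
    ultimately have "?horner A (c # cs) = P * (c \<cdot>\<^sub>m 1\<^sub>m n) * Q + P * (B * F) * Q"
      using Cons.IH by (simp add: F_def)
    also have "\<dots> = P * (c \<cdot>\<^sub>m 1\<^sub>m n + B * F) * Q"
      using P Q B F mult_add_distrib_mat[OF P, of "c \<cdot>\<^sub>m 1\<^sub>m n" n "B * F"]
        add_mult_distrib_mat[OF _ _ Q, of "P * (c \<cdot>\<^sub>m 1\<^sub>m n)" n "P * (B * F)"]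
      by simp
    finally show ?case by (simp add: F_def)
  qed
  then show ?thesis
    using A B unfolding mat_poly_def by simp
qed

lemma mat_poly_diag:
  "mat_poly p (mat_diag n u) = mat_diag n (\<lambda>i. poly p (u i))"
proof -
  have "foldr (\<lambda>c M. c \<cdot>\<^sub>m 1\<^sub>m n + mat_diag n u * M) cs (0\<^sub>m n n)
      = mat_diag n (\<lambda>i. horner_sum id (u i) cs)" for cs
  proof (induction cs)
    case (Cons c cs)
    then show ?case
      by (simp add: mat_diag_diag) (auto simp: mat_diag_def)
  qed (auto simp: mat_diag_def)
  then show ?thesis
    unfolding mat_poly_def poly_def by simp
qed

lemma poly_commutatorsI:
  "A \<in> carrier_mat n n \<Longrightarrow> B \<in> carrier_mat n n
    \<Longrightarrow> mat_poly p (A * B) - mat_poly p (B * A) \<in> poly_commutators p n"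
  unfolding poly_commutators_def by blast

lemma poly_commutators_carrier:
  "X \<in> poly_commutators p n \<Longrightarrow> X \<in> carrier_mat n n"
  unfolding poly_commutators_def by (auto simp: minus_carrier_mat mat_poly_carrier)

lemma poly_commutators_similar:
  fixes p :: "'a::comm_ring_1 poly"
  assumes Y: "Y \<in> poly_commutators p n" and XY: "similar_mat X Y"
  shows "X \<in> poly_commutators p n"
proof -
  obtain A B where A: "A \<in> carrier_mat n n" and B: "B \<in> carrier_mat n n"
    and Y_eq: "Y = mat_poly p (A * B) - mat_poly p (B * A)"
    using Y unfolding poly_commutators_def by blast
  obtain P Q where wit: "similar_mat_wit X Y P Q"
    using XY unfolding similar_mat_def by blast
  have "dim_row X = n"
    using similar_mat_witD(5)[OF refl wit] poly_commutators_carrier[OF Y] by auto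
  note wit_facts = similar_mat_witD[OF refl wit, unfolded this]
  have P: "P \<in> carrier_mat n n" and Q: "Q \<in> carrier_mat n n" and PQ: "P * Q = 1\<^sub>m n"
    and QP: "Q * P = 1\<^sub>m n" and X_eq: "X = P * Y * Q"
    using wit_facts by auto
  have conj: "mat_poly p ((P * C * Q) * (P * D * Q)) = P * mat_poly p (C * D) * Q"
    if C: "C \<in> carrier_mat n n" and D: "D \<in> carrier_mat n n" for C D
  proof -
    have "similar_mat_wit (P * (C * D) * Q) (C * D) P Q"
      by (rule similar_mat_witI[OF PQ QP refl]) (use P Q C D in auto)
    then show ?thesis
      by (simp add: mult_conj_mat[OF P Q QP C D] mat_poly_similar)
  qed
  have AB: "mat_poly p (A * B) \<in> carrier_mat n n" and BA: "mat_poly p (B * A) \<in> carrier_mat n n"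
    using A B by (simp_all add: mat_poly_carrier)
  have "X = P * mat_poly p (A * B) * Q - P * mat_poly p (B * A) * Q"
    unfolding X_eq Y_eq using P Q AB BA
    by (simp add: mult_minus_distrib_mat[OF P AB BA]
        minus_mult_distrib_mat[OF mult_carrier_mat[OF P AB] mult_carrier_mat[OF P BA] Q])
  also have "\<dots> = mat_poly p ((P * A * Q) * (P * B * Q)) - mat_poly p ((P * B * Q) * (P * A * Q))"
    using conj A B by simp
  finally show ?thesis
    using P Q A B by (simp add: poly_commutatorsI)
qed

lemma mat_poly_minus_similar_mem_poly_commutators:
  fixes p :: "'a::comm_ring_1 poly"
  assumes Q: "Q \<in> carrier_mat n n" and sim: "similar_mat W' (mat_poly p Q)"
  shows "mat_poly p Q - W' \<in> poly_commutators p n"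
proof -
  obtain P R where wit: "similar_mat_wit W' (mat_poly p Q) P R"
    using sim unfolding similar_mat_def by blast
  have "dim_row W' = n"
    using similar_mat_witD(5)[OF refl wit] mat_poly_carrier[OF Q, of p] by auto
  note wit_facts = similar_mat_witD[OF refl wit, unfolded this]
  have P: "P \<in> carrier_mat n n" and R: "R \<in> carrier_mat n n" and PR: "P * R = 1\<^sub>m n"
    and RP: "R * P = 1\<^sub>m n" and W'_eq: "W' = P * mat_poly p Q * R"
    using wit_facts by auto
  have "similar_mat_wit (P * Q * R) Q P R"
    by (rule similar_mat_witI[OF PR RP refl]) (use P Q R in auto)
  then have "W' = mat_poly p ((P * Q) * R)"
    by (simp add: W'_eq mat_poly_similar)
  moreover have "Q = R * (P * Q)"
    using mult_cancel_inverse_left[OF R P RP Q] by simp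
  ultimately have "mat_poly p Q - W' = mat_poly p (R * (P * Q)) - mat_poly p ((P * Q) * R)"
    by simp
  with poly_commutatorsI[OF R mult_carrier_mat[OF P Q]] show ?thesis
    by simp
qed

section \<open>Triangular matrices with distinct diagonal entries\<close>

text \<open>Coordinates of an eigenvector of an upper triangular matrix \<open>T\<close> for the eigenvalue
  \<open>T\<^sub>j\<^sub>j\<close>, by back substitution; this divides by \<open>T\<^sub>j\<^sub>j - T\<^sub>i\<^sub>i\<close>, which is nonzero when the
  diagonal entries are distinct.\<close>

function triangular_eigvec :: "'a::field mat \<Rightarrow> nat \<Rightarrow> nat \<Rightarrow> 'a" where
  "triangular_eigvec T j i =
    (if j < i then 0 else if i = j then 1
     else (\<Sum>k\<in>{i<..j}. T $$ (i,k) * triangular_eigvec T j k) / (T $$ (j,j) - T $$ (i,i)))"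
  by pat_completeness auto
termination by (relation "measure (\<lambda>(T,j,i). j - i)") auto

declare triangular_eigvec.simps [simp del]

lemma triangular_eigvec_eigen:
  fixes T :: "'a::field mat"
  assumes T: "T \<in> carrier_mat n n" "upper_triangular T"
    and distinct: "inj_on (\<lambda>i. T $$ (i,i)) {..<n}"
    and i: "i < n" and j: "j < n"
  shows "(\<Sum>k<n. T $$ (i,k) * triangular_eigvec T j k) = triangular_eigvec T j i * T $$ (j,j)"
proof -
  have vanish: "T $$ (i,k) * triangular_eigvec T j k = 0" if "k \<notin> {i..j}" "k < n" for k
  proof (cases "k < i")
    case True
    then show ?thesis using T i by (auto simp: upper_triangular_def)
  next
    case False
    then show ?thesis using that by (simp add: triangular_eigvec.simps)
  qed
  show ?thesis
  proof (cases "i \<le> j")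
    case False
    then have "(\<Sum>k<n. T $$ (i,k) * triangular_eigvec T j k) = 0"
      using vanish by (intro sum.neutral) auto
    then show ?thesis
      using False by (simp add: triangular_eigvec.simps)
  next
    case True
    have "(\<Sum>k<n. T $$ (i,k) * triangular_eigvec T j k) = (\<Sum>k\<in>{i..j}. T $$ (i,k) * triangular_eigvec T j k)"
      using vanish j by (intro sum.mono_neutral_right) auto
    also have "{i..j} = insert i {i<..j}"
      using True by auto
    finally have sum_eq: "(\<Sum>k<n. T $$ (i,k) * triangular_eigvec T j k)
        = T $$ (i,i) * triangular_eigvec T j i + (\<Sum>k\<in>{i<..j}. T $$ (i,k) * triangular_eigvec T j k)"
      by simp
    show ?thesis
    proof (cases "i = j")
      case True
      then show ?thesis
        using sum_eq by (simp add: triangular_eigvec.simps)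
    next
      case False
      then have "T $$ (j,j) - T $$ (i,i) \<noteq> 0"
        using distinct i j by (auto dest: inj_onD)
      then have "(\<Sum>k\<in>{i<..j}. T $$ (i,k) * triangular_eigvec T j k)
          = triangular_eigvec T j i * (T $$ (j,j) - T $$ (i,i))"
        using False \<open>i \<le> j\<close> by (subst (2) triangular_eigvec.simps) simp
      then show ?thesis
        using sum_eq by (simp add: algebra_simps)
    qed
  qed
qed

lemma upper_triangular_similar_mat_diag:
  fixes T :: "'a::field mat"
  assumes T: "T \<in> carrier_mat n n" "upper_triangular T"
    and diag: "\<And>i. i < n \<Longrightarrow> T $$ (i,i) = d i" and distinct: "inj_on d {..<n}"
  shows "similar_mat T (mat_diag n d)"
proof -
  define S where "S = mat n n (\<lambda>(i,j). triangular_eigvec T j i)"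
  have S: "S \<in> carrier_mat n n"
    unfolding S_def by simp
  have "inj_on (\<lambda>i. T $$ (i,i)) {..<n}"
    using distinct diag by (simp add: inj_on_def)
  note eigen = triangular_eigvec_eigen[OF T this]
  have TS: "T * S = S * mat_diag n d"
  proof (rule eq_matI)
    fix i j assume "i < dim_row (S * mat_diag n d)" "j < dim_col (S * mat_diag n d)"
    then have i: "i < n" and j: "j < n"
      using S by auto
    have "(T * S) $$ (i,j) = (\<Sum>k<n. T $$ (i,k) * triangular_eigvec T j k)"
      using T i j by (simp add: S_def scalar_prod_def lessThan_atLeast0)
    also have "\<dots> = triangular_eigvec T j i * d j"
      using eigen[OF i j] diag[OF j] by simp
    also have "\<dots> = (S * mat_diag n d) $$ (i,j)"
      unfolding mat_diag_mult_right[OF S] using i j by (simp add: S_def)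
    finally show "(T * S) $$ (i,j) = (S * mat_diag n d) $$ (i,j)" .
  qed (use T S in auto)
  have "upper_triangular S"
    unfolding S_def by (auto simp: triangular_eigvec.simps)
  then have "det S = prod_list (diag_mat S)"
    using det_upper_triangular S by blast
  also have "diag_mat S = replicate n 1"
    unfolding S_def diag_mat_def by (rule nth_equalityI) (auto simp: triangular_eigvec.simps)
  finally have "det S \<noteq> 0"
    by simp
  then obtain S' where S': "S' \<in> carrier_mat n n" and SS': "S * S' = 1\<^sub>m n" and S'S: "S' * S = 1\<^sub>m n"
    using det_nonzero_obtain_inverse[OF S] by blast
  have "T = T * S * S'"
    using T S S' SS' by simp
  also have "\<dots> = S * mat_diag n d * S'"
    unfolding TS ..
  finally show ?thesis
    using T S S' SS' S'S by (intro similar_matI[of _ _ _ _ n]) auto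
qed

lemma lower_triangular_similar_mat_diag:
  fixes T :: "'a::field mat"
  assumes T: "T \<in> carrier_mat n n" "upper_triangular (transpose_mat T)"
    and diag: "\<And>i. i < n \<Longrightarrow> T $$ (i,i) = d i" and distinct: "inj_on d {..<n}"
  shows "similar_mat T (mat_diag n d)"
proof -
  have "similar_mat (transpose_mat T) (mat_diag n d)"
    using T diag distinct by (intro upper_triangular_similar_mat_diag) auto
  then have "similar_mat T (transpose_mat (mat_diag n d))"
    using similar_mat_transpose by fastforce
  moreover have "transpose_mat (mat_diag n d) = mat_diag n d"
    by (auto simp: mat_diag_def)
  ultimately show ?thesis
    by simp
qed

section \<open>Matrices with prescribed diagonal in \<open>p[M\<^sub>n, M\<^sub>n]\<close>\<close>

lemma mem_poly_commutators_if_diag: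
  fixes p :: "'a::field poly"
  assumes Y: "Y \<in> carrier_mat n n"
    and inj_pu: "inj_on (\<lambda>i. poly p (u i)) {..<n}" and inj_v: "inj_on v {..<n}"
    and sim: "similar_mat (mat_diag n v) (mat_diag n (\<lambda>i. poly p (u i)))"
    and diag: "\<And>i. i < n \<Longrightarrow> Y $$ (i,i) = poly p (u i) - v i"
  shows "Y \<in> poly_commutators p n"
proof -
  define W where "W = mat n n (\<lambda>(i,j). if i = j then poly p (u i) else if i < j then Y $$ (i,j) else 0)"
  define W' where "W' = mat n n (\<lambda>(i,j). if i = j then v i else if j < i then - Y $$ (i,j) else 0)"
  have W: "W \<in> carrier_mat n n" and W': "W' \<in> carrier_mat n n"
    unfolding W_def W'_def by auto
  have Y_eq: "Y = W - W'"
    using Y diag by (intro eq_matI) (auto simp: W_def W'_def)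
  have "similar_mat W (mat_diag n (\<lambda>i. poly p (u i)))"
    using W inj_pu by (intro upper_triangular_similar_mat_diag) (auto simp: W_def upper_triangular_def)
  then obtain P Q where wit: "similar_mat_wit W (mat_poly p (mat_diag n u)) P Q"
    unfolding similar_mat_def mat_poly_diag by blast
  then have P: "P \<in> carrier_mat n n" and Q: "Q \<in> carrier_mat n n"
    and PQ: "P * Q = 1\<^sub>m n" and QP: "Q * P = 1\<^sub>m n" and W_eq: "W = P * mat_poly p (mat_diag n u) * Q"
    using similar_mat_witD2[OF W wit] by auto
  define U where "U = P * mat_diag n u * Q"
  have U: "U \<in> carrier_mat n n"
    unfolding U_def using P Q by (auto intro: mult_carrier_mat)
  have "similar_mat_wit U (mat_diag n u) P Q"
    unfolding U_def by (rule similar_mat_witI[OF PQ QP refl]) (use P Q in auto)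
  then have W_poly: "W = mat_poly p U"
    unfolding W_eq by (simp add: mat_poly_similar)
  note similar_mat_trans [trans]
  have "similar_mat W' (mat_diag n v)"
    using W' inj_v by (intro lower_triangular_similar_mat_diag) (auto simp: W'_def upper_triangular_def)
  also note sim
  also have "similar_mat (mat_diag n (\<lambda>i. poly p (u i))) W"
    by (rule similar_mat_sym) fact
  finally have "similar_mat W' (mat_poly p U)"
    unfolding W_poly .
  then show ?thesis
    unfolding Y_eq W_poly by (rule mat_poly_minus_similar_mem_poly_commutators[OF U])
qed

definition diag_pattern :: "'a::ab_group_add \<Rightarrow> nat \<Rightarrow> 'a" where
  "diag_pattern d i = (if i = 0 then d else if i = 1 then - d else 0)"

definition diag_pattern_class :: "'a::field \<Rightarrow> nat \<Rightarrow> 'a mat set" where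
  "diag_pattern_class d n =
    {X. \<exists>Z. Z \<in> carrier_mat n n \<and> (\<forall>i<n. Z $$ (i,i) = diag_pattern d i) \<and> similar_mat X Z}"

lemma diag_pattern_classI:
  "Z \<in> carrier_mat n n \<Longrightarrow> (\<And>i. i < n \<Longrightarrow> Z $$ (i,i) = diag_pattern d i)
    \<Longrightarrow> Z \<in> diag_pattern_class d n"
  unfolding diag_pattern_class_def by (blast intro: similar_mat_refl)

lemma diag_pattern_class_carrier:
  assumes "X \<in> diag_pattern_class d n"
  shows "X \<in> carrier_mat n n"
proof -
  obtain Z where Z: "Z \<in> carrier_mat n n" and "similar_mat Z X"
    using assms unfolding diag_pattern_class_def by (blast intro: similar_mat_sym)
  then obtain P Q where "similar_mat_wit Z X P Q"
    unfolding similar_mat_def by blast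
  then show ?thesis
    by (rule similar_mat_witD2(5)[OF Z])
qed

lemma diag_pattern_class_similar:
  "similar_mat X Y \<Longrightarrow> Y \<in> diag_pattern_class d n \<Longrightarrow> X \<in> diag_pattern_class d n"
  unfolding diag_pattern_class_def by (blast intro: similar_mat_trans)

lemma diag_pattern_class_border:
  fixes X :: "'a::field mat"
  assumes k: "2 \<le> k" and X: "X \<in> diag_pattern_class d k"
    and B: "B \<in> carrier_mat k 1" and C: "C \<in> carrier_mat 1 k"
  shows "four_block_mat X B C (0\<^sub>m 1 1) \<in> diag_pattern_class d (Suc k)"
proof -
  obtain Z P Q where Z: "Z \<in> carrier_mat k k" and Z_diag: "\<forall>i<k. Z $$ (i,i) = diag_pattern d i"
    and wit: "similar_mat_wit X Z P Q"
    using X unfolding diag_pattern_class_def similar_mat_def by blast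
  have X_carr: "X \<in> carrier_mat k k"
    using diag_pattern_class_carrier[OF X] .
  note w = similar_mat_witD2[OF X_carr wit]
  have "similar_mat_wit (four_block_mat X B C (0\<^sub>m 1 1)) (four_block_mat Z (Q * B) (C * P) (0\<^sub>m 1 1))
      (four_block_mat P (0\<^sub>m k 1) (0\<^sub>m 1 k) (1\<^sub>m 1))
      (four_block_mat Q (0\<^sub>m k 1) (0\<^sub>m 1 k) (1\<^sub>m 1))"
  proof (rule similar_mat_wit_four_block[OF wit similar_mat_wit_refl[OF zero_carrier_mat]])
    show "B = P * (Q * B) * 1\<^sub>m 1"
      using w B by (simp add: mult_cancel_inverse_left[of P k Q] flip: assoc_mult_mat[of P k k Q k B 1])
    show "C = 1\<^sub>m 1 * (C * P) * Q"
      using w C by (simp add: assoc_mult_mat[of C 1 k P k Q k])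
  qed (use w B C in auto)
  then have "similar_mat (four_block_mat X B C (0\<^sub>m 1 1)) (four_block_mat Z (Q * B) (C * P) (0\<^sub>m 1 1))"
    unfolding similar_mat_def by blast
  moreover have "four_block_mat Z (Q * B) (C * P) (0\<^sub>m 1 1) \<in> diag_pattern_class d (Suc k)"
    using Z Z_diag k w B C by (intro diag_pattern_classI) (auto simp: diag_pattern_def less_Suc_eq)
  ultimately show ?thesis
    by (rule diag_pattern_class_similar)
qed

lemma diag_pattern_class_subset_poly_commutators:
  fixes p :: "'a::field poly"
  assumes n: "2 \<le> n" and inj_pu: "inj_on (\<lambda>i. poly p (u i)) {..<n}"
    and d: "d = 0 \<or> d = poly p (u 0) - poly p (u 1)"
  shows "diag_pattern_class d n \<subseteq> poly_commutators p n"
proof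
  fix X assume "X \<in> diag_pattern_class d n"
  then obtain Z where Z: "Z \<in> carrier_mat n n" and Z_diag: "\<forall>i<n. Z $$ (i,i) = diag_pattern d i"
    and XZ: "similar_mat X Z"
    unfolding diag_pattern_class_def by blast
  have "Z \<in> poly_commutators p n"
    using d
  proof
    assume "d = 0"
    then show ?thesis
      using Z inj_pu Z_diag
      by (intro mem_poly_commutators_if_diag[where v = "\<lambda>i. poly p (u i)"])
        (auto simp: diag_pattern_def intro: similar_mat_refl[OF mat_diag_dim])
  next
    assume d_eq: "d = poly p (u 0) - poly p (u 1)"
    define \<sigma> :: "nat \<Rightarrow> nat" where "\<sigma> i = (if i = 0 then 1 else if i = 1 then 0 else i)" for i
    have "mat_diag n (\<lambda>i. poly p (u (\<sigma> i))) = swap_cols_rows 0 1 (mat_diag n (\<lambda>i. poly p (u i)))"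
      using n by (intro eq_matI) (auto simp: \<sigma>_def mat_diag_def)
    then have "similar_mat (mat_diag n (\<lambda>i. poly p (u (\<sigma> i)))) (mat_diag n (\<lambda>i. poly p (u i)))"
      using n swap_cols_rows_similar[OF mat_diag_dim, of 0 n 1] by simp
    moreover have "inj_on (\<lambda>i. poly p (u (\<sigma> i))) {..<n}"
    proof -
      have inj_\<sigma>: "inj_on \<sigma> {..<n}" and range_\<sigma>: "\<sigma> ` {..<n} \<subseteq> {..<n}"
        using n unfolding \<sigma>_def inj_on_def by auto
      have "inj_on ((\<lambda>i. poly p (u i)) \<circ> \<sigma>) {..<n}"
        by (rule comp_inj_on[OF inj_\<sigma> inj_on_subset[OF inj_pu range_\<sigma>]])
      then show ?thesis
        by (simp add: comp_def)
    qed
    ultimately show ?thesis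
      using Z inj_pu Z_diag d_eq
      by (intro mem_poly_commutators_if_diag[where v = "\<lambda>i. poly p (u (\<sigma> i))"])
        (auto simp: \<sigma>_def diag_pattern_def)
  qed
  then show "X \<in> poly_commutators p n"
    using XZ by (rule poly_commutators_similar)
qed

section \<open>Factorization into matrices of patterned diagonal\<close>

definition has_pattern_factorization :: "'a::field \<Rightarrow> nat \<Rightarrow> 'a mat \<Rightarrow> bool" where
  "has_pattern_factorization d n M \<longleftrightarrow>
    (\<exists>X Y. X \<in> diag_pattern_class 0 n \<and> det X \<noteq> 0
      \<and> Y \<in> diag_pattern_class 0 n \<union> diag_pattern_class d n \<and> M = X * Y)"

lemma has_pattern_factorization_similar:
  fixes M :: "'a::field mat"
  assumes M': "has_pattern_factorization d n M'" and MM': "similar_mat M M'"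
  shows "has_pattern_factorization d n M"
proof -
  obtain X Y where X: "X \<in> diag_pattern_class 0 n" and det_X: "det X \<noteq> 0"
    and Y: "Y \<in> diag_pattern_class 0 n \<union> diag_pattern_class d n" and M'_eq: "M' = X * Y"
    using M' unfolding has_pattern_factorization_def by blast
  have X_carr: "X \<in> carrier_mat n n" and Y_carr: "Y \<in> carrier_mat n n"
    using X Y diag_pattern_class_carrier by blast+
  obtain P Q where wit: "similar_mat_wit M M' P Q"
    using MM' unfolding similar_mat_def by blast
  have "M \<in> carrier_mat n n"
    using similar_mat_witD2(5)[OF _ similar_mat_wit_sym[OF wit], of n n] X_carr Y_carr M'_eq by auto
  note w = similar_mat_witD2[OF this wit]
  have sim: "similar_mat (P * Z * Q) Z" if "Z \<in> carrier_mat n n" for Z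
    using w that by (intro similar_matI[of "P * Z * Q" Z P Q n]) auto
  have "M = P * (X * Y) * Q"
    using w(3) unfolding M'_eq .
  also have "\<dots> = (P * X * Q) * (P * Y * Q)"
    using w X_carr Y_carr by (intro mult_conj_mat[symmetric]) auto
  finally have "M = (P * X * Q) * (P * Y * Q)" .
  moreover have "det (P * X * Q) \<noteq> 0"
    using det_similar[OF sim[OF X_carr]] det_X by simp
  moreover have "P * X * Q \<in> diag_pattern_class 0 n"
    by (rule diag_pattern_class_similar[OF sim[OF X_carr] X])
  moreover have "P * Y * Q \<in> diag_pattern_class 0 n \<union> diag_pattern_class d n"
    using diag_pattern_class_similar[OF sim[OF Y_carr]] Y by blast
  ultimately show ?thesis
    unfolding has_pattern_factorization_def by blast
qed

definition cyclic_shift_mat :: "nat \<Rightarrow> 'a::field mat" where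
  "cyclic_shift_mat n = mat n n (\<lambda>(i,j). if j = Suc i mod n then 1 else 0)"

lemma dim_cyclic_shift_mat [simp]:
  "dim_row (cyclic_shift_mat n) = n" "dim_col (cyclic_shift_mat n) = n"
  unfolding cyclic_shift_mat_def by simp_all

lemma cyclic_shift_mat_diag:
  "2 \<le> n \<Longrightarrow> i < n \<Longrightarrow> cyclic_shift_mat n $$ (i,i) = 0"
  unfolding cyclic_shift_mat_def by (auto simp: mod_Suc)

lemma cyclic_shift_mat_transpose:
  "cyclic_shift_mat n * transpose_mat (cyclic_shift_mat n) = (1\<^sub>m n :: 'a::field mat)"
proof (rule eq_matI)
  fix i j assume "i < dim_row (1\<^sub>m n :: 'a mat)" "j < dim_col (1\<^sub>m n :: 'a mat)"
  then have i: "i < n" and j: "j < n" by auto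
  have row: "row (cyclic_shift_mat n) l = (unit_vec n (Suc l mod n) :: 'a vec)" if "l < n" for l
    using that by (intro eq_vecI) (auto simp: cyclic_shift_mat_def unit_vec_def)
  have "(cyclic_shift_mat n * transpose_mat (cyclic_shift_mat n)) $$ (i,j)
      = row (cyclic_shift_mat n) i \<bullet> row (cyclic_shift_mat n) j"
    using i j by (simp only: index_mult_mat col_transpose dim_cyclic_shift_mat index_transpose_mat)
  also have "\<dots> = (unit_vec n (Suc i mod n) \<bullet> unit_vec n (Suc j mod n) :: 'a)"
    using i j by (simp only: row)
  also have "\<dots> = unit_vec n (Suc j mod n) $ (Suc i mod n)"
    using i by (intro scalar_prod_left_unit) auto
  also have "\<dots> = (if i = j then 1 else 0)"
  proof -
    have "Suc i mod n < n" and "(Suc i mod n = Suc j mod n) = (i = j)"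
      using i j by (auto simp: mod_Suc)
    then show ?thesis
      by (simp add: unit_vec_def)
  qed
  finally show "(cyclic_shift_mat n * transpose_mat (cyclic_shift_mat n)) $$ (i,j) = (1\<^sub>m n :: 'a mat) $$ (i,j)"
    using i j by simp
qed auto

lemma has_pattern_factorization_diagonal:
  fixes M :: "'a::field mat"
  assumes n: "2 \<le> n" and M: "M \<in> carrier_mat n n"
    and off_diag: "\<And>i j. i < n \<Longrightarrow> j < n \<Longrightarrow> i \<noteq> j \<Longrightarrow> M $$ (i,j) = 0"
  shows "has_pattern_factorization d n M"
proof -
  define C where "C = (cyclic_shift_mat n :: 'a mat)"
  have C: "C \<in> carrier_mat n n" and C': "transpose_mat C \<in> carrier_mat n n"
    unfolding C_def carrier_mat_def by simp_all
  have CC': "C * transpose_mat C = 1\<^sub>m n"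
    unfolding C_def by (rule cyclic_shift_mat_transpose)
  have C_diag: "C $$ (i,i) = 0" if "i < n" for i
    unfolding C_def using n that by (rule cyclic_shift_mat_diag)
  have "(transpose_mat C * M) $$ (i,i) = 0" if i: "i < n" for i
  proof -
    have "(transpose_mat C * M) $$ (i,i) = (\<Sum>k\<in>{0..<n}. C $$ (k,i) * M $$ (k,i))"
      using C M i by (simp add: scalar_prod_def)
    also have "\<dots> = 0"
    proof (rule sum.neutral, intro ballI)
      fix k assume "k \<in> {0..<n}"
      then show "C $$ (k,i) * M $$ (k,i) = 0"
        using off_diag[of k i] C_diag[OF i] i by (cases "k = i") auto
    qed
    finally show ?thesis .
  qed
  then have "transpose_mat C * M \<in> diag_pattern_class 0 n"
    using C' M by (intro diag_pattern_classI) (auto simp: diag_pattern_def)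
  moreover have "C \<in> diag_pattern_class 0 n"
    using C C_diag by (intro diag_pattern_classI) (auto simp: diag_pattern_def)
  moreover have "det C \<noteq> 0"
    using det_mult[OF C C'] CC' by auto
  moreover have "M = C * (transpose_mat C * M)"
    by (rule mult_cancel_inverse_left[OF C C' CC' M, symmetric])
  ultimately show ?thesis
    unfolding has_pattern_factorization_def by (intro exI[of _ C] exI[of _ "transpose_mat C * M"]) simp
qed

text \<open>With \<open>M = [[a, b], [c, e]]\<close>, \<open>b, c \<noteq> 0\<close>, take \<open>X = [[0, x], [y, 0]]\<close> with \<open>x = -b/d\<close>,
  \<open>y = c/d\<close>; then \<open>X\<^sup>-\<^sup>1 M = [[d, e/y], [a/x, -d]]\<close>.\<close>

lemma has_pattern_factorization_2x2_off_diag: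
  fixes M :: "'a::field mat"
  assumes d: "d \<noteq> 0" and M: "M \<in> carrier_mat 2 2"
    and b: "M $$ (0,1) \<noteq> 0" and c: "M $$ (1,0) \<noteq> 0"
  shows "has_pattern_factorization d 2 M"
proof -
  define x where "x = - M $$ (0,1) / d"
  define y where "y = M $$ (1,0) / d"
  have x: "x \<noteq> 0" and y: "y \<noteq> 0"
    using b c d unfolding x_def y_def by auto
  define X where "X = mat 2 2 (\<lambda>(i,j). if (i,j) = (0,1) then x else if (i,j) = (1,0) then y else 0)"
  define X' where "X' = mat 2 2 (\<lambda>(i,j). if (i,j) = (0,1) then 1 / y else if (i,j) = (1,0) then 1 / x else 0)"
  define Y where "Y = mat 2 2 (\<lambda>(i,j). if i = j then diag_pattern d i
                               else if i = 0 then M $$ (1,1) / y else M $$ (0,0) / x)"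
  have X: "X \<in> carrier_mat 2 2" and X': "X' \<in> carrier_mat 2 2" and Y: "Y \<in> carrier_mat 2 2"
    unfolding X_def X'_def Y_def by auto
  have less_2: "i < 2 \<longleftrightarrow> i = 0 \<or> i = 1" for i :: nat
    by auto
  have "X * X' = 1\<^sub>m 2"
  proof (rule eq_matI)
    fix i j :: nat assume "i < dim_row (1\<^sub>m 2 :: 'a mat)" "j < dim_col (1\<^sub>m 2 :: 'a mat)"
    then have i: "i < 2" and j: "j < 2" by auto
    show "(X * X') $$ (i,j) = 1\<^sub>m 2 $$ (i,j)"
      unfolding index_mult_mat_2[OF X X' i j] using i j x y by (auto simp: less_2 X_def X'_def)
  qed (use X X' in auto)
  then have "det X \<noteq> 0"
    using det_mult[OF X X'] by auto
  moreover have "M = X * Y"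
  proof (rule eq_matI)
    fix i j :: nat assume "i < dim_row (X * Y)" "j < dim_col (X * Y)"
    then have i: "i < 2" and j: "j < 2" using X Y by auto
    show "M $$ (i,j) = (X * Y) $$ (i,j)"
      unfolding index_mult_mat_2[OF X Y i j] using i j x y d
      by (auto simp: less_2 X_def Y_def x_def y_def diag_pattern_def)
  qed (use X Y M in auto)
  moreover have "X \<in> diag_pattern_class 0 2" and "Y \<in> diag_pattern_class d 2"
    using X Y by (auto intro!: diag_pattern_classI simp: X_def Y_def diag_pattern_def)
  ultimately show ?thesis
    unfolding has_pattern_factorization_def by blast
qed

text \<open>Conjugating by an elementary matrix turns the lower left entry into \<open>q(a)\<close> for a quadratic
  \<open>q\<close> with leading coefficient \<open>-M\<^sub>0\<^sub>1\<close>; as \<open>F\<close> is infinite, some \<open>a\<close> is not a root.\<close>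

lemma has_pattern_factorization_2x2_upper_right:
  fixes M :: "'a::field mat"
  assumes inf: "infinite (UNIV :: 'a set)" and d: "d \<noteq> 0" and M: "M \<in> carrier_mat 2 2"
    and b: "M $$ (0,1) \<noteq> 0"
  shows "has_pattern_factorization d 2 M"
proof -
  let ?q = "[:M $$ (1,0), M $$ (1,1) - M $$ (0,0), - M $$ (0,1):]"
  have "?q \<noteq> 0"
    using b by simp
  then obtain a where a: "poly ?q a \<noteq> 0"
    using poly_nonroot_exists[OF inf] by blast
  let ?M' = "add_col_sub_row a 1 0 M"
  have "?M' \<in> carrier_mat 2 2" and "?M' $$ (0,1) = M $$ (0,1)" and "?M' $$ (1,0) = poly ?q a"
    using M by (simp_all add: algebra_simps)
  then have "has_pattern_factorization d 2 ?M'"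
    using b a by (intro has_pattern_factorization_2x2_off_diag[OF d]) auto
  moreover have "similar_mat M ?M'"
    using add_col_sub_row_similar[OF M, of 1 0 a] by (simp add: similar_mat_sym)
  ultimately show ?thesis
    by (rule has_pattern_factorization_similar)
qed

lemma has_pattern_factorization_2x2:
  fixes M :: "'a::field mat"
  assumes inf: "infinite (UNIV :: 'a set)" and d: "d \<noteq> 0" and M: "M \<in> carrier_mat 2 2"
  shows "has_pattern_factorization d 2 M"
proof -
  consider "M $$ (0,1) \<noteq> 0" | "M $$ (1,0) \<noteq> 0" | "M $$ (0,1) = 0" "M $$ (1,0) = 0"
    by blast
  then show ?thesis
  proof cases
    case 1
    then show ?thesis
      by (rule has_pattern_factorization_2x2_upper_right[OF inf d M])
  next
    case 2
    let ?M' = "swap_cols_rows 0 1 M"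
    have "?M' \<in> carrier_mat 2 2" and "?M' $$ (0,1) \<noteq> 0"
      using M 2 by simp_all
    then have "has_pattern_factorization d 2 ?M'"
      by (rule has_pattern_factorization_2x2_upper_right[OF inf d])
    moreover have "similar_mat M ?M'"
      using swap_cols_rows_similar[OF M, of 0 1] by (simp add: similar_mat_sym)
    ultimately show ?thesis
      by (rule has_pattern_factorization_similar)
  next
    case 3
    have less_2: "i < 2 \<longleftrightarrow> i = 0 \<or> i = 1" for i :: nat
      by auto
    show ?thesis
      using 3 M by (intro has_pattern_factorization_diagonal) (auto simp: less_2)
  qed
qed

lemma exists_row_mult_eq_and_inverts_col:
  fixes m :: "'a::field mat"
  assumes k: "2 \<le> k" and m: "m \<in> carrier_mat k 1" and \<mu>: "\<mu> \<in> carrier_mat 1 1"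
    and j0: "j0 < k" and m_j0: "m $$ (j0,0) \<noteq> 0"
  obtains H D where "H \<in> carrier_mat 1 k" "D \<in> carrier_mat k 1" "H * m = \<mu>" "H * D = 1\<^sub>m 1"
proof -
  define j1 :: nat where "j1 = (if j0 = 0 then 1 else 0)"
  have j1: "j1 < k" "j1 \<noteq> j0"
    using k j0 unfolding j1_def by auto
  define c where "c = (\<mu> $$ (0,0) - m $$ (j1,0)) / m $$ (j0,0)"
  define H :: "'a mat" where "H = mat 1 k (\<lambda>(_, j). if j = j1 then 1 else if j = j0 then c else 0)"
  define D :: "'a mat" where "D = mat k 1 (\<lambda>(i, _). if i = j1 then 1 else 0)"
  have H: "H \<in> carrier_mat 1 k" and D: "D \<in> carrier_mat k 1"
    unfolding H_def D_def by auto
  have H_mult: "(H * B) $$ (0,l) = B $$ (j1,l) + c * B $$ (j0,l)" if B: "B \<in> carrier_mat k 1" and l: "l < 1"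
    for B l
  proof -
    have "(H * B) $$ (0,l) = (\<Sum>j\<in>{0..<k}. H $$ (0,j) * B $$ (j,l))"
      using H B l by (simp add: scalar_prod_def)
    also have "\<dots> = (\<Sum>j\<in>{j1, j0}. H $$ (0,j) * B $$ (j,l))"
      using j0 j1 by (intro sum.mono_neutral_right) (auto simp: H_def)
    also have "\<dots> = B $$ (j1,l) + c * B $$ (j0,l)"
      using j0 j1 by (simp add: H_def)
    finally show ?thesis .
  qed
  have "H * m = \<mu>"
  proof (rule eq_matI)
    fix i j assume "i < dim_row \<mu>" "j < dim_col \<mu>"
    then show "(H * m) $$ (i,j) = \<mu> $$ (i,j)"
      using \<mu> H_mult[OF m, of 0] m_j0 by (simp add: c_def)
  qed (use H m \<mu> in auto)
  moreover have "H * D = 1\<^sub>m 1"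
  proof (rule eq_matI)
    fix i j assume "i < dim_row (1\<^sub>m 1 :: 'a mat)" "j < dim_col (1\<^sub>m 1 :: 'a mat)"
    then show "(H * D) $$ (i,j) = 1\<^sub>m 1 $$ (i,j)"
      using H_mult[OF D, of 0] j0 j1 by (simp add: D_def)
  qed (use H D in auto)
  ultimately show ?thesis
    using that H D by blast
qed

lemma four_block_mat_border_mult:
  fixes X :: "'a::comm_ring_1 mat"
  assumes X: "X \<in> carrier_mat k k" and X': "X' \<in> carrier_mat k k" and XX': "X * X' = 1\<^sub>m k"
    and Y: "Y \<in> carrier_mat k k" and D: "D \<in> carrier_mat k l" and H: "H \<in> carrier_mat l k"
    and HD: "H * D = 1\<^sub>m l" and A: "A \<in> carrier_mat k k" and b: "b \<in> carrier_mat k l"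
    and c: "c \<in> carrier_mat l k" and e: "e \<in> carrier_mat l l" and Hb: "H * b = e"
    and XY: "X * Y = A - D * (H * A - c)"
  shows "four_block_mat X D (H * X) (0\<^sub>m l l) * four_block_mat Y (X' * b) (H * A - c) (0\<^sub>m l l)
    = four_block_mat A b c e"
proof -
  define G where "G = H * A - c"
  have G: "G \<in> carrier_mat l k"
    unfolding G_def using H A c by auto
  have XX'b: "X * (X' * b) = b"
    using mult_cancel_inverse_left[OF X X' XX' b] .
  have "X * Y + D * G = A"
    unfolding XY G_def[symmetric] using A D G by (intro eq_matI) auto
  moreover have "X * (X' * b) + D * 0\<^sub>m l l = b"
    unfolding XX'b using b D by (intro eq_matI) auto
  moreover have "H * X * Y + 0\<^sub>m l l * G = c"
  proof -
    have "H * X * Y = H * A - H * D * G"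
      using H X Y A D G
      by (simp add: XY G_def[symmetric] mult_minus_distrib_mat[of H l k] assoc_mult_mat[of H l k D l G k])
    then show ?thesis
      using H A c G by (intro eq_matI) (auto simp: HD G_def)
  qed
  moreover have "H * X * (X' * b) + 0\<^sub>m l l * 0\<^sub>m l l = e"
  proof -
    have "H * X * (X' * b) = e"
      using assoc_mult_mat[OF H X, of "X' * b" l] X' b by (simp add: XX'b Hb)
    then show ?thesis
      using e by (intro eq_matI) auto
  qed
  ultimately show ?thesis
    using X D H Y X' b G by (simp add: G_def mult_four_block_mat[of X k k D l "H * X" l _ Y _ _ l])
qed

lemma det_four_block_mat_border:
  fixes X :: "'a::idom mat"
  assumes X: "X \<in> carrier_mat k k" and X': "X' \<in> carrier_mat k k" and XX': "X * X' = 1\<^sub>m k"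
    and D: "D \<in> carrier_mat k l" and H: "H \<in> carrier_mat l k" and HD: "H * D = 1\<^sub>m l"
  shows "det (four_block_mat X D (H * X) (0\<^sub>m l l)) = (- 1) ^ l * det X"
proof -
  have "H * X * X' * D = 1\<^sub>m l"
    using H X X' D XX' HD by (simp add: assoc_mult_mat[of H l k X k X' k])
  moreover have "0\<^sub>m l l - 1\<^sub>m l = (- 1) \<cdot>\<^sub>m (1\<^sub>m l :: 'a mat)"
    by (intro eq_matI) auto
  ultimately show ?thesis
    using det_four_block_mat_schur[OF X X' XX' D _ zero_carrier_mat, of "H * X"] H X
    by (simp add: mult.commute)
qed

lemma split_block_last:
  assumes "M \<in> carrier_mat (Suc k) (Suc k)"
  obtains M1 m r \<mu> where "M1 \<in> carrier_mat k k" "m \<in> carrier_mat k 1" "r \<in> carrier_mat 1 k"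
    "\<mu> \<in> carrier_mat 1 1" "M = four_block_mat M1 m r \<mu>"
proof -
  obtain M1 m r \<mu> where split: "split_block M k k = (M1, m, r, \<mu>)"
    by (cases "split_block M k k") auto
  have "dim_row M = k + 1" "dim_col M = k + 1"
    using assms by auto
  from split_block[OF split this] show ?thesis
    using that by simp
qed

text \<open>Write \<open>M = [[M\<^sub>1, m], [r, \<mu>]]\<close> and choose a row \<open>H\<close> and a column \<open>D\<close> with \<open>H m = \<mu>\<close>,
  \<open>H D = 1\<close>. Factoring \<open>M\<^sub>1 - D (H M\<^sub>1 - r) = X\<^sub>1 Y\<^sub>1\<close>, the bordered matrices
  \<open>X = [[X\<^sub>1, D], [H X\<^sub>1, 0]]\<close> and \<open>Y = [[Y\<^sub>1, X\<^sub>1\<^sup>-\<^sup>1 m], [H M\<^sub>1 - r, 0]]\<close> satisfy \<open>M = X Y\<close>.\<close>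

lemma has_pattern_factorization_border_step:
  fixes M :: "'a::field mat"
  assumes k: "2 \<le> k" and IH: "\<And>N. N \<in> carrier_mat k k \<Longrightarrow> has_pattern_factorization d k N"
    and M: "M \<in> carrier_mat (Suc k) (Suc k)" and j0: "j0 < k" and M_j0: "M $$ (j0,k) \<noteq> 0"
  shows "has_pattern_factorization d (Suc k) M"
proof -
  obtain M1 m r \<mu> where M1: "M1 \<in> carrier_mat k k" and m: "m \<in> carrier_mat k 1"
    and r: "r \<in> carrier_mat 1 k" and \<mu>: "\<mu> \<in> carrier_mat 1 1" and M_eq: "M = four_block_mat M1 m r \<mu>"
    using split_block_last[OF M] by blast
  have "m $$ (j0,0) = M $$ (j0,k)"
    unfolding M_eq using M1 m r \<mu> j0 by simp
  then obtain H D where H: "H \<in> carrier_mat 1 k" and D: "D \<in> carrier_mat k 1"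
    and Hm: "H * m = \<mu>" and HD: "H * D = 1\<^sub>m 1"
    using exists_row_mult_eq_and_inverts_col[OF k m \<mu> j0] M_j0 by metis
  have "M1 - D * (H * M1 - r) \<in> carrier_mat k k"
    using D r by (intro minus_carrier_mat mult_carrier_mat[OF D]) auto
  then obtain X1 Y1 where X1: "X1 \<in> diag_pattern_class 0 k" and det_X1: "det X1 \<noteq> 0"
    and Y1: "Y1 \<in> diag_pattern_class 0 k \<union> diag_pattern_class d k"
    and X1Y1: "M1 - D * (H * M1 - r) = X1 * Y1"
    using IH unfolding has_pattern_factorization_def by blast
  have X1_carr: "X1 \<in> carrier_mat k k" and Y1_carr: "Y1 \<in> carrier_mat k k"
    using X1 Y1 diag_pattern_class_carrier by blast+
  obtain X1' where X1': "X1' \<in> carrier_mat k k" and X1X1': "X1 * X1' = 1\<^sub>m k"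
    using det_nonzero_obtain_inverse[OF X1_carr det_X1] by blast
  define X where "X = four_block_mat X1 D (H * X1) (0\<^sub>m 1 1)"
  define Y where "Y = four_block_mat Y1 (X1' * m) (H * M1 - r) (0\<^sub>m 1 1)"
  have "M = X * Y"
    unfolding M_eq X_def Y_def
    by (rule four_block_mat_border_mult[symmetric, OF X1_carr X1' X1X1' Y1_carr D H HD M1 m r \<mu> Hm
          X1Y1[symmetric]])
  moreover have "det X \<noteq> 0"
    unfolding X_def using det_four_block_mat_border[OF X1_carr X1' X1X1' D H HD] det_X1 by simp
  moreover have "X \<in> diag_pattern_class 0 (Suc k)"
    unfolding X_def using X1 D H X1_carr by (intro diag_pattern_class_border[OF k]) auto
  moreover have "Y \<in> diag_pattern_class e (Suc k)" if "Y1 \<in> diag_pattern_class e k" for e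
    unfolding Y_def using that X1' m H M1 r by (intro diag_pattern_class_border[OF k]) auto
  with Y1 have "Y \<in> diag_pattern_class 0 (Suc k) \<union> diag_pattern_class d (Suc k)"
    by blast
  ultimately show ?thesis
    unfolding has_pattern_factorization_def by blast
qed

lemma has_pattern_factorization_all:
  fixes M :: "'a::field mat"
  assumes inf: "infinite (UNIV :: 'a set)" and d: "d \<noteq> 0" and n: "2 \<le> n" and M: "M \<in> carrier_mat n n"
  shows "has_pattern_factorization d n M"
  using n M
proof (induction n arbitrary: M rule: nat_induct_at_least)
  case base
  then show ?case
    by (rule has_pattern_factorization_2x2[OF inf d])
next
  case (Suc k)
  show ?case
  proof (cases "\<forall>i<Suc k. \<forall>j<Suc k. i \<noteq> j \<longrightarrow> M $$ (i,j) = 0")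
    case True
    then show ?thesis
      using Suc by (intro has_pattern_factorization_diagonal) auto
  next
    case False
    then obtain i j where i: "i < Suc k" and j: "j < Suc k" and "i \<noteq> j" and Mij: "M $$ (i,j) \<noteq> 0"
      by blast
    define i' where "i' = (if i = k then j else i)"
    let ?M' = "swap_cols_rows j k M"
    have M': "?M' \<in> carrier_mat (Suc k) (Suc k)"
      using Suc.prems by simp
    have "i' < k" and "?M' $$ (i', k) = M $$ (i,j)"
      using Suc.prems i j \<open>i \<noteq> j\<close> unfolding i'_def by auto
    then have "has_pattern_factorization d (Suc k) ?M'"
      using Suc.hyps Suc.IH M' Mij by (intro has_pattern_factorization_border_step) auto
    moreover have "similar_mat M ?M'"
      using swap_cols_rows_similar[OF Suc.prems, of j k] j by (simp add: similar_mat_sym)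
    ultimately show ?thesis
      by (rule has_pattern_factorization_similar)
  qed
qed

theorem theorem4p2:
  fixes p :: "'a::field poly" and n :: nat
  assumes "infinite (UNIV :: 'a set)"
    and "n > 1"
    and "degree p > 0"
  shows "\<forall>M \<in> carrier_mat n n. \<exists>X Y. X \<in> poly_commutators p n \<and> Y \<in> poly_commutators p n \<and> M = X * Y"
proof
  fix M :: "'a mat" assume M: "M \<in> carrier_mat n n"
  have n: "2 \<le> n"
    using assms(2) by simp
  obtain u :: "nat \<Rightarrow> 'a" where inj_u: "inj (\<lambda>i. poly p (u i))"
    using exists_inj_poly_values[OF assms(1,3)] by blast
  have inj_on_u: "inj_on (\<lambda>i. poly p (u i)) {..<n}"
    using inj_u by (rule inj_on_subset) simp
  have d: "poly p (u 0) - poly p (u 1) \<noteq> 0"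
    using injD[OF inj_u, of 0 1] by auto
  obtain X Y where "X \<in> diag_pattern_class 0 n" and "M = X * Y"
    and "Y \<in> diag_pattern_class 0 n \<union> diag_pattern_class (poly p (u 0) - poly p (u 1)) n"
    using has_pattern_factorization_all[OF assms(1) d n M] unfolding has_pattern_factorization_def by blast
  moreover have "diag_pattern_class e n \<subseteq> poly_commutators p n"
    if "e = 0 \<or> e = poly p (u 0) - poly p (u 1)" for e
    by (rule diag_pattern_class_subset_poly_commutators[OF n inj_on_u that])
  ultimately show "\<exists>X Y. X \<in> poly_commutators p n \<and> Y \<in> poly_commutators p n \<and> M = X * Y"
    by blast
qed

end
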